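(* Let $A=(a(x),dF(x))$ and $B=(b(x),dF(x))$ be games. Then $h(p)=1/\int\frac{1}{pa(x)+(1-p)b(x)}\,dF(x)$ is continuous on $[0,1]$.
   Context: A game is a pair $(a(x),dF(x))$ with $dF$ a probability measure on $\mathbb{R}$ and $a\ge0$ measurable with finite positive integral. Convention: $1/(+\infty)=0$. *)

theory Defs
  imports "HOL-Probability.Probability"
begin

definition game :: "(real \<Rightarrow> real) \<Rightarrow> real measure \<Rightarrow> bool" where
  "game a F \<longleftrightarrow> prob_space F \<and> sets F = sets borel \<and>
     a \<in> borel_measurable borel \<and> (\<forall>x. 0 \<le> a x) \<and>
     integrable F a \<and> 0 < integral\<^sup>L F a"

text \<open>h(p) = 1 / integral of 1/(p a + (1-p) b) dF, computed in [0,\<infinity>] where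
  inverse 0 = \<infinity> and 1/\<infinity> = 0.\<close>
definition hfun :: "(real \<Rightarrow> real) \<Rightarrow> (real \<Rightarrow> real) \<Rightarrow> real measure \<Rightarrow> real \<Rightarrow> ennreal" where
  "hfun a b F p = 1 / (\<integral>\<^sup>+ x. inverse (ennreal (p * a x + (1 - p) * b x)) \<partial>F)"

end

theory Submission
  imports Defs
begin

text \<open>Work with G(p) = \<integral> 1/(p a + (1-p) b) dF in [0,\<infinity>], where h = 1/G and inversion is
  continuous. Fatou's lemma makes G lower semicontinuous. Conversely, for p near p0 the
  mixture p a + (1-p) b dominates m(p) (p0 a + (1-p0) b) with m(p) \<rightarrow> 1, hence
  G(p) \<le> G(p0) / m(p), which gives upper semicontinuity.\<close>

lemma ennreal_inverse_antimono:
  fixes x y :: ennreal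
  assumes "x \<le> y"
  shows "inverse y \<le> inverse x"
proof (cases "x = 0")
  case False
  with assms show ?thesis
    by (cases x; cases y) (auto simp: inverse_ennreal top_unique le_imp_inverse_le)
qed simp

lemma tendsto_inverse_ennreal:
  fixes f :: "'a \<Rightarrow> ennreal"
  assumes "(f \<longlongrightarrow> l) F"
  shows "((\<lambda>x. inverse (f x)) \<longlongrightarrow> inverse l) F"
  using continuous_on_tendsto_compose[OF continuous_on_inverse_ennreal[OF continuous_on_id] assms UNIV_I]
  by (simp add: comp_def)

lemma nn_integral_le_liminf_of_tendsto:
  fixes f :: "nat \<Rightarrow> 'a \<Rightarrow> ennreal"
  assumes "\<And>n. f n \<in> borel_measurable M" and "\<And>x. (\<lambda>n. f n x) \<longlonglongrightarrow> g x"
  shows "integral\<^sup>N M g \<le> liminf (\<lambda>n. integral\<^sup>N M (f n))"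
proof -
  have "integral\<^sup>N M g = (\<integral>\<^sup>+ x. liminf (\<lambda>n. f n x) \<partial>M)"
    using assms(2) by (intro nn_integral_cong lim_imp_Liminf[symmetric]) auto
  also have "\<dots> \<le> liminf (\<lambda>n. integral\<^sup>N M (f n))"
    using assms(1) by (rule nn_integral_liminf)
  finally show ?thesis .
qed

text \<open>The largest m with m p0 \<le> p and m (1 - p0) \<le> 1 - p; at p0 \<in> {0,1}, where one
  constraint is vacuous, it is replaced by the cap m \<le> 1.\<close>
definition mix_ratio :: "real \<Rightarrow> real \<Rightarrow> real" where
  "mix_ratio p0 p =
     min (if p0 = 0 then 1 else p / p0) (if p0 = 1 then 1 else (1 - p) / (1 - p0))"

lemma mix_ratio_same [simp]: "mix_ratio p p = 1"
  by (simp add: mix_ratio_def)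

lemma isCont_mix_ratio: "isCont (mix_ratio p0) p"
  unfolding mix_ratio_def by (cases "p0 = 0"; cases "p0 = 1") (auto intro!: continuous_intros)

lemma mix_ratio_mixture_le:
  fixes p0 p u v :: real
  assumes "p0 \<in> {0..1}" "p \<in> {0..1}" "0 \<le> u" "0 \<le> v"
  shows "mix_ratio p0 p * (p0 * u + (1 - p0) * v) \<le> p * u + (1 - p) * v"
proof -
  have "mix_ratio p0 p * p0 \<le> p" "mix_ratio p0 p * (1 - p0) \<le> 1 - p"
    using assms(1,2) by (auto simp: mix_ratio_def field_simps min_def)
  then have "mix_ratio p0 p * p0 * u + mix_ratio p0 p * (1 - p0) * v \<le> p * u + (1 - p) * v"
    using assms(3,4) by (intro add_mono mult_right_mono)
  then show ?thesis
    by (simp add: algebra_simps)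
qed

definition inverse_mixture_integral ::
    "(real \<Rightarrow> real) \<Rightarrow> (real \<Rightarrow> real) \<Rightarrow> real measure \<Rightarrow> real \<Rightarrow> ennreal" where
  "inverse_mixture_integral a b F p = (\<integral>\<^sup>+ x. inverse (ennreal (p * a x + (1 - p) * b x)) \<partial>F)"

context
  fixes a b :: "real \<Rightarrow> real" and F :: "real measure"
  assumes a_measurable: "a \<in> borel_measurable F" and b_measurable: "b \<in> borel_measurable F"
    and a_nonneg: "\<And>x. 0 \<le> a x" and b_nonneg: "\<And>x. 0 \<le> b x"
begin

lemma measurable_inverse_mixture [measurable]:
  "(\<lambda>x. inverse (ennreal (p * a x + (1 - p) * b x))) \<in> borel_measurable F"
  using a_measurable b_measurable by measurable

lemma inverse_mixture_integral_le_liminf: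
  assumes "X \<longlonglongrightarrow> p"
  shows "inverse_mixture_integral a b F p \<le> liminf (\<lambda>n. inverse_mixture_integral a b F (X n))"
  unfolding inverse_mixture_integral_def
proof (rule nn_integral_le_liminf_of_tendsto)
  show "(\<lambda>x. inverse (ennreal (X n * a x + (1 - X n) * b x))) \<in> borel_measurable F" for n
    by measurable
  show "(\<lambda>n. inverse (ennreal (X n * a x + (1 - X n) * b x)))
      \<longlonglongrightarrow> inverse (ennreal (p * a x + (1 - p) * b x))" for x
    by (intro tendsto_inverse_ennreal tendsto_ennrealI tendsto_intros assms)
qed

lemma inverse_mixture_integral_le_scaled:
  assumes p0: "p0 \<in> {0..1}" and p: "p \<in> {0..1}" and pos: "0 < mix_ratio p0 p"
  shows "inverse_mixture_integral a b F p
    \<le> inverse (ennreal (mix_ratio p0 p)) * inverse_mixture_integral a b F p0"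
proof -
  let ?m = "mix_ratio p0 p"
  have pointwise: "inverse (ennreal (p * a x + (1 - p) * b x))
      \<le> inverse (ennreal ?m) * inverse (ennreal (p0 * a x + (1 - p0) * b x))" for x
  proof -
    have nonneg: "0 \<le> p0 * a x + (1 - p0) * b x"
      using p0 a_nonneg[of x] b_nonneg[of x] by simp
    have "inverse (ennreal (p * a x + (1 - p) * b x))
        \<le> inverse (ennreal (?m * (p0 * a x + (1 - p0) * b x)))"
      using mix_ratio_mixture_le[OF p0 p a_nonneg b_nonneg]
      by (intro ennreal_inverse_antimono ennreal_leI)
    also have "\<dots> = inverse (ennreal ?m) * inverse (ennreal (p0 * a x + (1 - p0) * b x))"
      using pos nonneg by (simp add: ennreal_mult ennreal_inverse_mult)
    finally show ?thesis .
  qed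
  have "inverse_mixture_integral a b F p
      \<le> (\<integral>\<^sup>+ x. inverse (ennreal ?m) * inverse (ennreal (p0 * a x + (1 - p0) * b x)) \<partial>F)"
    unfolding inverse_mixture_integral_def using pointwise by (intro nn_integral_mono)
  also have "\<dots> = inverse (ennreal ?m) * inverse_mixture_integral a b F p0"
    unfolding inverse_mixture_integral_def by (intro nn_integral_cmult) measurable
  finally show ?thesis .
qed

lemma limsup_inverse_mixture_integral_le:
  assumes p0: "p0 \<in> {0..1}" and X: "\<And>n. X n \<in> {0..1}" and lim: "X \<longlonglongrightarrow> p0"
  shows "limsup (\<lambda>n. inverse_mixture_integral a b F (X n)) \<le> inverse_mixture_integral a b F p0"
proof -
  let ?G = "inverse_mixture_integral a b F"
  have ratio_lim: "(\<lambda>n. mix_ratio p0 (X n)) \<longlonglongrightarrow> 1"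
    using isCont_tendsto_compose[OF isCont_mix_ratio[of p0 p0] lim] by simp
  then have "eventually (\<lambda>n. 0 < mix_ratio p0 (X n)) sequentially"
    by (rule order_tendstoD) simp
  then have "limsup (\<lambda>n. ?G (X n)) \<le> limsup (\<lambda>n. inverse (ennreal (mix_ratio p0 (X n))) * ?G p0)"
    by (intro Limsup_mono) (auto elim!: eventually_mono intro: inverse_mixture_integral_le_scaled p0 X)
  also have "\<dots> = ?G p0"
  proof (rule lim_imp_Limsup)
    have "(\<lambda>n. inverse (ennreal (mix_ratio p0 (X n)))) \<longlonglongrightarrow> inverse (ennreal 1)"
      by (intro tendsto_inverse_ennreal tendsto_ennrealI ratio_lim)
    then show "(\<lambda>n. inverse (ennreal (mix_ratio p0 (X n))) * ?G p0) \<longlonglongrightarrow> ?G p0"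
      using tendsto_mult_ennreal[OF _ tendsto_const, of _ 1 sequentially "?G p0"] by simp
  qed simp
  finally show ?thesis .
qed

lemma continuous_on_inverse_mixture_integral:
  "continuous_on {0..1} (inverse_mixture_integral a b F)"
  unfolding continuous_on_def
proof
  fix p0 :: real
  assume p0: "p0 \<in> {0..1}"
  let ?G = "inverse_mixture_integral a b F"
  show "(?G \<longlongrightarrow> ?G p0) (at p0 within {0..1})"
    unfolding tendsto_at_iff_sequentially comp_def
  proof (intro allI impI)
    fix X :: "nat \<Rightarrow> real"
    assume X: "\<forall>n. X n \<in> {0..1} - {p0}" and lim: "X \<longlonglongrightarrow> p0"
    have "liminf (\<lambda>n. ?G (X n)) \<le> limsup (\<lambda>n. ?G (X n))"
      by (rule Liminf_le_Limsup) simp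
    moreover have "?G p0 \<le> liminf (\<lambda>n. ?G (X n))"
      using lim by (rule inverse_mixture_integral_le_liminf)
    moreover have "limsup (\<lambda>n. ?G (X n)) \<le> ?G p0"
      using X lim by (intro limsup_inverse_mixture_integral_le p0) auto
    ultimately show "(\<lambda>n. ?G (X n)) \<longlonglongrightarrow> ?G p0"
      by (intro Liminf_eq_Limsup) auto
  qed
qed

end

theorem lemmaD12:
  fixes a b :: "real \<Rightarrow> real" and F :: "real measure"
  assumes "game a F" and "game b F"
  shows "continuous_on {0..1} (hfun a b F)"
proof -
  have "borel_measurable F = borel_measurable borel"
    using assms(1) unfolding game_def by (intro measurable_cong_sets) auto
  then have "a \<in> borel_measurable F" "b \<in> borel_measurable F" "\<And>x. 0 \<le> a x" "\<And>x. 0 \<le> b x"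
    using assms unfolding game_def by auto
  then have "continuous_on {0..1} (\<lambda>p. inverse (inverse_mixture_integral a b F p))"
    by (intro continuous_on_inverse_ennreal continuous_on_inverse_mixture_integral)
  moreover have "hfun a b F = (\<lambda>p. inverse (inverse_mixture_integral a b F p))"
    unfolding hfun_def inverse_mixture_integral_def by (simp add: divide_ennreal_def)
  ultimately show ?thesis
    by simp
qed

end
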